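(* For odd $N\ge5$ let $G_{N,1}$ be the graph with vertex set $\mathbb Z_N$ in which two distinct vertices $i,j$ are adjacent iff $j-i\not\equiv\pm1\pmod N$, and let $Kf(G_{N,1})=\sum_{\{u,v\}} R(u,v)$ be its Kirchhoff index (sum of effective resistances over unordered pairs of distinct vertices). With $\Delta=\sqrt{N(N-4)}$, \[ Kf(G_{N,1})\sim\frac{N^2}{\Delta}\sim N\qquad (N\to\infty\text{ through odd integers}). \]
   Context: Effective resistance uses unit conductance on every edge; $a_N\sim b_N$ means $a_N/b_N\to1$. *)

theory Defs
  imports Complex_Main
begin

text \<open>Graphs on a finite vertex set V (a set of naturals) with a symmetric
adjacency predicate E; every edge has unit conductance.\<close>

definition laplacian :: "nat set \<Rightarrow> (nat \<Rightarrow> nat \<Rightarrow> bool) \<Rightarrow> (nat \<Rightarrow> real) \<Rightarrow> nat \<Rightarrow> real" where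
  "laplacian V E x v = (\<Sum>w\<in>{w\<in>V. E v w}. x v - x w)"

text \<open>Effective resistance between u and v: the potential difference x u - x v
for a potential x on V with unit current injected at u and extracted at v,
i.e. L x = e_u - e_v (well defined for connected graphs).\<close>

definition eff_res :: "nat set \<Rightarrow> (nat \<Rightarrow> nat \<Rightarrow> bool) \<Rightarrow> nat \<Rightarrow> nat \<Rightarrow> real" where
  "eff_res V E u v =
     (let x = (SOME x. \<forall>w\<in>V. laplacian V E x w =
                 (if w = u then 1 else 0) - (if w = v then 1 else 0))
      in x u - x v)"

definition kirchhoff :: "nat set \<Rightarrow> (nat \<Rightarrow> nat \<Rightarrow> bool) \<Rightarrow> real" where
  "kirchhoff V E = (\<Sum>(u,v)\<in>{(u,v). u \<in> V \<and> v \<in> V \<and> u < v}. eff_res V E u v)"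

definition G_adj :: "nat \<Rightarrow> nat \<Rightarrow> nat \<Rightarrow> bool" where
  "G_adj N i j = (i \<noteq> j \<and> (int j - int i) mod int N \<noteq> 1
                      \<and> (int j - int i) mod int N \<noteq> int N - 1)"

definition Kf_G :: "nat \<Rightarrow> real" where
  "Kf_G N = kirchhoff {0..<N} (G_adj N)"

end

theory Submission
  imports Defs "HOL-Number_Theory.Cong" "Jordan_Normal_Form.Determinant" "HOL-Real_Asymp.Real_Asymp"
begin

(* G_{N,1} is the complement of the cycle C_N, so its Laplacian is (N - 2) I + S + S^-1 - J,
   with S the cyclic shift and J the all-ones matrix; on mean-zero potentials it acts as
   M = (N - 2) I + S + S^-1.  For N >= 5 the matrix M is strictly diagonally dominant, hence
   invertible, and the maximum principle bounds every solution of M y = e_u - e_v by 1/(N - 4).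
   Reading off rows u and v gives (N - 2) R(u,v) = 2 + O(1/N), and summing over the
   N(N - 1)/2 pairs gives Kf(G_{N,1}) ~ N.  Finally N^2/Delta ~ N because Delta ~ N. *)

lemma int_mod_diff_eq_iff:
  fixes j k w N :: nat
  assumes "j < N" "k < N"
  shows "(int j - int w) mod int N = int k \<longleftrightarrow> j = (w + k) mod N"
proof -
  have "(int j - int w) mod int N = int k \<longleftrightarrow> (int j - int w) mod int N = int k mod int N"
    using assms by simp
  also have "\<dots> \<longleftrightarrow> int j mod int N = int (w + k) mod int N"
    by (simp add: mod_eq_dvd_iff algebra_simps)
  also have "\<dots> \<longleftrightarrow> j = (w + k) mod N"
    using assms by (metis mod_less of_nat_eq_iff zmod_int)
  finally show ?thesis .
qed

lemma G_adj_iff: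
  assumes "1 < N" "w < N" "j < N"
  shows "G_adj N w j \<longleftrightarrow> j \<noteq> w \<and> j \<noteq> (w + 1) mod N \<and> j \<noteq> (w + (N - 1)) mod N"
  using assms int_mod_diff_eq_iff[of j N 1 w] int_mod_diff_eq_iff[of j N "N - 1" w]
  unfolding G_adj_def by auto

lemma sum_mod_shift:
  "(\<Sum>w<N. f ((w + k) mod N)) = (\<Sum>w<N. f w)" for N :: nat
proof (cases "N = 0")
  case False
  have inj: "inj_on (\<lambda>w. (w + k) mod N) {..<N}"
  proof (rule inj_onI)
    fix a b assume "a \<in> {..<N}" "b \<in> {..<N}" and "(a + k) mod N = (b + k) mod N"
    from this(3) have "[a + k = b + k] (mod N)"
      unfolding Cong.cong_def .
    then have "[a = b] (mod N)"
      by (simp only: cong_add_rcancel_nat)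
    then show "a = b"
      using \<open>a \<in> {..<N}\<close> \<open>b \<in> {..<N}\<close> by (simp add: cong_less_modulus_unique_nat)
  qed
  have "(\<lambda>w. (w + k) mod N) ` {..<N} = {..<N}"
    using inj False by (intro endo_inj_surj) auto
  then show ?thesis using sum.reindex[OF inj, of f] by simp
qed simp

lemma laplacian_G_adj:
  assumes "3 \<le> N" "w < N"
  shows "laplacian {0..<N} (G_adj N) x w
       = (real N - 2) * x w + x ((w + 1) mod N) + x ((w + (N - 1)) mod N) - (\<Sum>j<N. x j)"
proof -
  let ?s = "(w + 1) mod N" and ?p = "(w + (N - 1)) mod N"
  have distinct: "?s \<noteq> w" "?p \<noteq> w" "?s \<noteq> ?p"
    using assms by (auto simp: mod_if)
  have nbrs: "{j \<in> {0..<N}. G_adj N w j} = {0..<N} - {w, ?s, ?p}"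
    using assms G_adj_iff[of N w] by auto
  have "laplacian {0..<N} (G_adj N) x w
      = (\<Sum>j\<in>{0..<N}. x w - x j) - (\<Sum>j\<in>{w, ?s, ?p}. x w - x j)"
    unfolding laplacian_def nbrs using assms by (subst sum_diff) auto
  also have "\<dots> = real N * x w - (\<Sum>j<N. x j) - ((x w - x ?s) + (x w - x ?p))"
    using distinct by (simp add: sum_subtractf atLeast0LessThan)
  finally show ?thesis by (simp add: algebra_simps)
qed

lemma diag_dominant_abs_bound:
  fixes y :: "'a \<Rightarrow> real"
  assumes "finite A" "c > 2" "p ` A \<subseteq> A" "s ` A \<subseteq> A"
    and bounded: "\<And>w. w \<in> A \<Longrightarrow> \<bar>c * y w + y (p w) + y (s w)\<bar> \<le> B"
    and "w \<in> A"
  shows "\<bar>y w\<bar> \<le> B / (c - 2)"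
proof -
  obtain w0 where w0: "w0 \<in> A" and max: "\<And>v. v \<in> A \<Longrightarrow> \<bar>y v\<bar> \<le> \<bar>y w0\<bar>"
  proof -
    have "Max ((\<lambda>v. \<bar>y v\<bar>) ` A) \<in> (\<lambda>v. \<bar>y v\<bar>) ` A"
      using assms(1,6) by (intro Max_in) auto
    then obtain w0 where "w0 \<in> A" "\<bar>y w0\<bar> = Max ((\<lambda>v. \<bar>y v\<bar>) ` A)"
      by force
    then show ?thesis
      using that assms(1) by (simp add: Max_ge)
  qed
  have "c * \<bar>y w0\<bar> \<le> \<bar>c * y w0 + y (p w0) + y (s w0)\<bar> + \<bar>y (p w0)\<bar> + \<bar>y (s w0)\<bar>"
    using \<open>c > 2\<close> by (simp add: abs_mult)
  also have "\<dots> \<le> B + 2 * \<bar>y w0\<bar>"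
    using bounded[OF w0] max[of "p w0"] max[of "s w0"] w0 assms(3,4) by force
  finally have "\<bar>y w0\<bar> \<le> B / (c - 2)"
    using \<open>c > 2\<close> by (simp add: field_simps)
  then show ?thesis using max[OF \<open>w \<in> A\<close>] by linarith
qed

lemma mat_solvable_if_kernel_trivial:
  fixes A :: "'a :: field mat"
  assumes A: "A \<in> carrier_mat n n"
    and kernel: "\<And>v. v \<in> carrier_vec n \<Longrightarrow> A *\<^sub>v v = 0\<^sub>v n \<Longrightarrow> v = 0\<^sub>v n"
    and b: "b \<in> carrier_vec n"
  shows "\<exists>x \<in> carrier_vec n. A *\<^sub>v x = b"
proof
  have det: "det A \<noteq> 0"
    using det_0_iff_vec_prod_zero_field[OF A] kernel by blast
  let ?B = "(1 / det A) \<cdot>\<^sub>m adj_mat A"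
  have B: "?B \<in> carrier_mat n n"
    using adj_mat(1)[OF A] by simp
  have "A * ?B = 1\<^sub>m n"
    using mult_smult_distrib[OF A adj_mat(1)[OF A]] adj_mat(2)[OF A] det
    by auto
  then show "A *\<^sub>v (?B *\<^sub>v b) = b"
    using assoc_mult_mat_vec[OF A B b] b by simp
  show "?B *\<^sub>v b \<in> carrier_vec n"
    using B b by simp
qed

lemma diag_dominant_system_solvable:
  fixes b :: "nat \<Rightarrow> real"
  assumes "c > 2" and p: "\<And>w. w < n \<Longrightarrow> p w < n" and s: "\<And>w. w < n \<Longrightarrow> s w < n"
  shows "\<exists>y. \<forall>w<n. c * y w + y (p w) + y (s w) = b w"
proof -
  define M where "M = mat n n (\<lambda>(i, j).
    (if j = i then c else 0) + (if j = p i then 1 else 0) + (if j = s i then 1 else 0))"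
  have M: "M \<in> carrier_mat n n"
    unfolding M_def by simp
  have M_apply: "(M *\<^sub>v v) $ i = c * v $ i + v $ p i + v $ s i"
    if "i < n" "v \<in> carrier_vec n" for v i
  proof -
    have "(M *\<^sub>v v) $ i = (\<Sum>j<n. (if j = i then c * v $ j else 0)
        + (if j = p i then v $ j else 0) + (if j = s i then v $ j else 0))"
      using that by (auto simp: M_def scalar_prod_def atLeast0LessThan algebra_simps intro!: sum.cong)
    also have "\<dots> = c * v $ i + v $ p i + v $ s i"
      using that p s by (simp add: sum.distrib)
    finally show ?thesis .
  qed
  have kernel: "v = 0\<^sub>v n" if v: "v \<in> carrier_vec n" "M *\<^sub>v v = 0\<^sub>v n" for v
  proof (rule eq_vecI)
    fix i assume "i < dim_vec (0\<^sub>v n :: real vec)"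
    moreover have "c * v $ w + v $ p w + v $ s w = 0" if "w < n" for w
      using M_apply[OF that v(1)] v(2) that by simp
    ultimately have "\<bar>v $ i\<bar> \<le> 0 / (c - 2)"
      using p s \<open>c > 2\<close>
      by (intro diag_dominant_abs_bound[of "{..<n}" c p s "\<lambda>i. v $ i"]) auto
    then show "v $ i = 0\<^sub>v n $ i"
      using \<open>i < dim_vec (0\<^sub>v n)\<close> by simp
  qed (use v in simp)
  then obtain x where "x \<in> carrier_vec n" "M *\<^sub>v x = vec n b"
    using mat_solvable_if_kernel_trivial[OF M kernel, of "vec n b"] by auto
  then show ?thesis
    by (intro exI[of _ "\<lambda>w. x $ w"]) (metis M_apply index_vec)
qed

lemma laplacian_G_adj_solvable:
  assumes "5 \<le> N" and balanced: "(\<Sum>w<N. b w) = 0"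
  shows "\<exists>x. \<forall>w\<in>{0..<N}. laplacian {0..<N} (G_adj N) x w = b w"
proof -
  obtain x where x: "\<And>w. w < N \<Longrightarrow>
      (real N - 2) * x w + x ((w + 1) mod N) + x ((w + (N - 1)) mod N) = b w"
    using diag_dominant_system_solvable[of "real N - 2" N "\<lambda>w. (w + 1) mod N"
        "\<lambda>w. (w + (N - 1)) mod N" b] assms by auto
  have "(\<Sum>w<N. (real N - 2) * x w + x ((w + 1) mod N) + x ((w + (N - 1)) mod N))
      = (real N - 2) * (\<Sum>w<N. x w) + (\<Sum>w<N. x ((w + 1) mod N))
        + (\<Sum>w<N. x ((w + (N - 1)) mod N))"
    by (simp only: sum.distrib sum_distrib_left)
  also have "\<dots> = real N * (\<Sum>w<N. x w)"
    by (simp only: sum_mod_shift) (simp add: algebra_simps)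
  finally have "real N * (\<Sum>w<N. x w) = 0"
    using x balanced by simp
  then have "(\<Sum>w<N. x w) = 0"
    using assms by simp
  then show ?thesis
    using x laplacian_G_adj[of N _ x] assms by (intro exI[of _ x]) auto
qed

lemma eff_res_potential_difference:
  assumes "\<exists>x. \<forall>w\<in>V. laplacian V E x w = (if w = u then 1 else 0) - (if w = v then 1 else 0)"
  shows "\<exists>x. (\<forall>w\<in>V. laplacian V E x w = (if w = u then 1 else 0) - (if w = v then 1 else 0))
           \<and> eff_res V E u v = x u - x v"
  using someI_ex[OF assms] unfolding eff_res_def Let_def by blast

lemma eff_res_G_adj_bound:
  assumes "5 \<le> N" "u < N" "v < N" "u \<noteq> v"
  shows "\<bar>(real N - 2) * eff_res {0..<N} (G_adj N) u v - 2\<bar> \<le> 4 / (real N - 4)"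
proof -
  define e where "e w = (if w = u then 1 else 0) - (if w = v then 1 else (0::real))" for w
  have "(\<Sum>w<N. e w) = 0"
    using assms by (simp add: e_def sum_subtractf)
  then obtain x where sol: "\<forall>w\<in>{0..<N}. laplacian {0..<N} (G_adj N) x w = e w"
      and R: "eff_res {0..<N} (G_adj N) u v = x u - x v"
    using eff_res_potential_difference[of "{0..<N}" "G_adj N" u v]
      laplacian_G_adj_solvable[OF \<open>5 \<le> N\<close>, of e]
    unfolding e_def by blast
  text \<open>Shifting x to mean zero turns the Laplacian into the invertible operator
    (N - 2) I + (cyclic shifts), to which the maximum principle applies.\<close>
  define y where "y w = x w - (\<Sum>j<N. x j) / real N" for w
  let ?s = "\<lambda>w. (w + 1) mod N" and ?p = "\<lambda>w. (w + (N - 1)) mod N"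
  have mean: "(real N - 2) * (S / real N) + S / real N + S / real N = S" for S
    using assms(1) by (simp add: field_simps)
  have y_eq: "(real N - 2) * y w + y (?s w) + y (?p w) = e w" if "w < N" for w
  proof -
    have "laplacian {0..<N} (G_adj N) x w = e w"
      using sol that by simp
    then show ?thesis
      using laplacian_G_adj[of N w x] that assms(1) mean[of "\<Sum>j<N. x j"]
      unfolding y_def right_diff_distrib by linarith
  qed
  have y_small: "\<bar>y w\<bar> \<le> 1 / (real N - 4)" if "w < N" for w
  proof -
    have "\<bar>y w\<bar> \<le> 1 / (real N - 2 - 2)"
      using y_eq assms that
      by (intro diag_dominant_abs_bound[of "{..<N}" _ ?s ?p]) (auto simp: e_def)
    then show ?thesis by simp
  qed
  have "(real N - 2) * eff_res {0..<N} (G_adj N) u v - 2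
      = y (?s v) + y (?p v) - y (?s u) - y (?p u)"
    using y_eq[of u] y_eq[of v] assms unfolding R by (simp add: y_def e_def algebra_simps)
  moreover have "4 / (real N - 4) = 4 * (1 / (real N - 4))"
    by simp
  ultimately show ?thesis
    using y_small[of "?s u"] y_small[of "?p u"] y_small[of "?s v"] y_small[of "?p v"] assms
    by (simp add: abs_le_iff)
qed

lemma card_ordered_pairs:
  "2 * card {(u, v). u \<in> {0..<n} \<and> v \<in> {0..<n} \<and> u < v} = n * (n - 1)"
proof -
  have "{(u, v). u \<in> {0..<n} \<and> v \<in> {0..<n} \<and> u < v} = prod.swap ` (SIGMA v:{0..<n}. {0..<v})"
    by (auto simp: image_iff)
  then have "card {(u, v). u \<in> {0..<n} \<and> v \<in> {0..<n} \<and> u < v} = (\<Sum>v\<in>{0..<n}. v)"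
    by (simp add: card_image)
  also have "2 * \<dots> = n * (n - 1)"
  proof (cases n)
    case (Suc m)
    then show ?thesis
      using double_gauss_sum[of m, where ?'a = nat] by (simp add: atLeastLessThanSuc_atLeastAtMost)
  qed simp
  finally show ?thesis .
qed

lemma Kf_G_bound:
  assumes "5 \<le> N"
  shows "\<bar>(real N - 2) * Kf_G N - real N * (real N - 1)\<bar> \<le> 2 * real N * (real N - 1) / (real N - 4)"
proof -
  define P where "P = {(u, v). u \<in> {0..<N} \<and> v \<in> {0..<N} \<and> u < v}"
  define R where "R p = eff_res {0..<N} (G_adj N) (fst p) (snd p)" for p
  have "real (2 * card P) = real (N * (N - 1))"
    unfolding P_def card_ordered_pairs ..
  then have card: "real (card P) = real N * (real N - 1) / 2"
    using assms by (simp add: of_nat_diff)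
  have "Kf_G N = (\<Sum>p\<in>P. R p)"
    unfolding Kf_G_def kirchhoff_def P_def R_def by (simp add: case_prod_beta)
  then have "(real N - 2) * Kf_G N - real N * (real N - 1) = (\<Sum>p\<in>P. (real N - 2) * R p - 2)"
    using card by (simp add: sum_subtractf sum_distrib_left)
  also have "\<bar>\<dots>\<bar> \<le> (\<Sum>p\<in>P. 4 / (real N - 4))"
    using eff_res_G_adj_bound[OF assms] unfolding P_def R_def
    by (intro order.trans[OF sum_abs sum_mono]) auto
  also have "\<dots> = 2 * real N * (real N - 1) / (real N - 4)"
    using card by simp
  finally show ?thesis .
qed

lemma Kf_G_asymptotic: "(\<lambda>N. Kf_G N / real N) \<longlonglongrightarrow> 1"
proof -
  define err where
    "err N = 2 * real N * (real N - 1) / (real N - 4) / (real N * (real N - 2))" for N :: nat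
  have close: "\<bar>Kf_G N / real N - (real N - 1) / (real N - 2)\<bar> \<le> err N" if "5 \<le> N" for N
  proof -
    have pos: "real N * (real N - 2) > 0"
      using that by simp
    have "Kf_G N / real N - (real N - 1) / (real N - 2)
        = ((real N - 2) * Kf_G N - real N * (real N - 1)) / (real N * (real N - 2))"
      using that by (simp add: diff_frac_eq algebra_simps)
    also have "\<bar>\<dots>\<bar> = \<bar>(real N - 2) * Kf_G N - real N * (real N - 1)\<bar> / (real N * (real N - 2))"
      by (rule abs_div_pos[OF pos, symmetric])
    also have "\<dots> \<le> err N"
      unfolding err_def using pos by (intro divide_right_mono Kf_G_bound[OF that]) simp
    finally show ?thesis .
  qed
  have close_ev: "\<forall>\<^sub>F N in sequentially.
      \<bar>Kf_G N / real N - (real N - 1) / (real N - 2)\<bar> \<le> err N"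
    using eventually_ge_at_top[of 5] close by (rule eventually_mono)
  have lower: "\<forall>\<^sub>F N in sequentially. (real N - 1) / (real N - 2) - err N \<le> Kf_G N / real N"
    using close_ev by (rule eventually_mono) (simp add: abs_le_iff)
  have upper: "\<forall>\<^sub>F N in sequentially. Kf_G N / real N \<le> (real N - 1) / (real N - 2) + err N"
    using close_ev by (rule eventually_mono) (simp add: abs_le_iff)
  have "(\<lambda>N. (real N - 1) / (real N - 2) - err N) \<longlonglongrightarrow> 1"
    "(\<lambda>N. (real N - 1) / (real N - 2) + err N) \<longlonglongrightarrow> 1"
    unfolding err_def by real_asymp+
  with lower upper show ?thesis
    by (rule tendsto_sandwich)
qed

theorem mainTheorem12:
  fixes N :: "nat \<Rightarrow> nat" and \<Delta> :: "nat \<Rightarrow> real"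
  assumes "\<And>k. N k = 2 * k + 5"
      and "\<And>k. \<Delta> k = sqrt (real (N k) * (real (N k) - 4))"
  shows "(\<lambda>k. Kf_G (N k) / (real (N k) ^ 2 / \<Delta> k)) \<longlonglongrightarrow> 1
       \<and> (\<lambda>k. (real (N k) ^ 2 / \<Delta> k) / real (N k)) \<longlonglongrightarrow> 1"
proof -
  have "strict_mono N"
    using assms(1) by (simp add: strict_mono_Suc_iff)
  have "(\<lambda>n. real n / sqrt (real n * (real n - 4))) \<longlonglongrightarrow> 1"
    by real_asymp
  from LIMSEQ_subseq_LIMSEQ[OF this \<open>strict_mono N\<close>]
  have ratio: "(\<lambda>k. real (N k) / \<Delta> k) \<longlonglongrightarrow> 1"
    by (simp add: o_def assms(2))
  from LIMSEQ_subseq_LIMSEQ[OF Kf_G_asymptotic \<open>strict_mono N\<close>]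
  have "(\<lambda>k. Kf_G (N k) / real (N k)) \<longlonglongrightarrow> 1"
    by (simp add: o_def)
  from tendsto_divide[OF this ratio]
  have "(\<lambda>k. (Kf_G (N k) / real (N k)) / (real (N k) / \<Delta> k)) \<longlonglongrightarrow> 1"
    by simp
  moreover have "(\<lambda>k. Kf_G (N k) / (real (N k) ^ 2 / \<Delta> k))
      = (\<lambda>k. (Kf_G (N k) / real (N k)) / (real (N k) / \<Delta> k))"
    and "(\<lambda>k. (real (N k) ^ 2 / \<Delta> k) / real (N k)) = (\<lambda>k. real (N k) / \<Delta> k)"
    using assms(1) by (auto simp: power2_eq_square)
  ultimately show ?thesis
    using ratio by (simp only:)
qed

end
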